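(* Let $\Omega\subset\mathbb{R}^N$ be a bounded open set, let $D_n\subset\Omega$ ($n\in\mathbb{N}$) and $D\subset\Omega$ be open sets, and let $1<p<+\infty$. If $W^{1,p}(D_n)$ converges to $W^{1,p}(D)$ in the sense of Mosco as $n\to\infty$, then $|D_n\,\Delta\, D|\to0$ and in particular $|D_n|\to|D|$ as $n\to\infty$.
   Context: $|\cdot|$ is Lebesgue measure and $\Delta$ the symmetric difference. For open $E\subset\Omega$, $W^{1,p}(E)$ is viewed as a closed subspace of $L^p(\Omega;\mathbb{R}^{N+1})$ via $u\mapsto(u,\nabla u)$ extended by $0$ outside $E$. Closed subspaces $A_n$ of a reflexive Banach space $X$ converge in the sense of Mosco to a closed subspace $A$ if (M1) whenever $x_k\in A_{n_k}$ along a subsequence and $x_k\rightharpoonup x$ weakly, then $x\in A$; and (M2) every $x\in A$ is the strong limit of some $x_n\in A_n$. *)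

theory Defs
  imports "HOL-Analysis.Analysis"
begin

fun Ck_fun :: "nat \<Rightarrow> ('a::euclidean_space \<Rightarrow> real) set" where
  "Ck_fun 0 = {f. continuous_on UNIV f}"
| "Ck_fun (Suc k) = {f. (\<forall>x. f differentiable (at x)) \<and>
      (\<forall>b\<in>Basis. (\<lambda>x. frechet_derivative f (at x) b) \<in> Ck_fun k)}"

definition smooth_fun :: "('a::euclidean_space \<Rightarrow> real) \<Rightarrow> bool" where
  "smooth_fun f \<longleftrightarrow> (\<forall>k. f \<in> Ck_fun k)"

definition test_funs :: "'a::euclidean_space set \<Rightarrow> ('a \<Rightarrow> real) set" where
  "test_funs E = {\<phi>. smooth_fun \<phi> \<and> compact (closure {x. \<phi> x \<noteq> 0})
                      \<and> closure {x. \<phi> x \<noteq> 0} \<subseteq> E}"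

definition Lp :: "real \<Rightarrow> 'a::euclidean_space set \<Rightarrow> ('a \<Rightarrow> 'b::euclidean_space) set" where
  "Lp p E = {f. f \<in> borel_measurable (lebesgue_on E) \<and>
                integrable (lebesgue_on E) (\<lambda>x. norm (f x) powr p)}"

definition weak_gradient :: "'a::euclidean_space set \<Rightarrow> ('a \<Rightarrow> real) \<Rightarrow> ('a \<Rightarrow> 'a) \<Rightarrow> bool" where
  "weak_gradient E u g \<longleftrightarrow>
     (\<forall>\<phi>\<in>test_funs E. \<forall>b\<in>Basis.
        integral\<^sup>L (lebesgue_on E) (\<lambda>x. u x * frechet_derivative \<phi> (at x) b)
        = - integral\<^sup>L (lebesgue_on E) (\<lambda>x. (g x \<bullet> b) * \<phi> x))"

definition W1p :: "real \<Rightarrow> 'a::euclidean_space set \<Rightarrow> (('a \<Rightarrow> real) \<times> ('a \<Rightarrow> 'a)) set" where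
  "W1p p E = {(u, g). u \<in> Lp p E \<and> g \<in> Lp p E \<and> weak_gradient E u g}"

text \<open>W^{1,p}(E) viewed inside L^p(Omega; R^{N+1}) via u \<mapsto> (u, grad u) extended by 0
  outside E; as a set of representatives (closed under a.e. equality).\<close>
definition W1p_emb :: "real \<Rightarrow> 'a::euclidean_space set \<Rightarrow> 'a set \<Rightarrow> ('a \<Rightarrow> real \<times> 'a) set" where
  "W1p_emb p \<Omega> E = {F \<in> Lp p \<Omega>. \<exists>u g. (u, g) \<in> W1p p E \<and>
       (AE x in lebesgue_on \<Omega>. F x = (if x \<in> E then (u x, g x) else 0))}"

text \<open>Weak convergence in L^p (1 < p < infinity), via the duality (L^p)' = L^{p'}.\<close>
definition Lp_weak_conv :: "real \<Rightarrow> 'a::euclidean_space set \<Rightarrow> (nat \<Rightarrow> 'a \<Rightarrow> 'b::euclidean_space) \<Rightarrow> ('a \<Rightarrow> 'b) \<Rightarrow> bool" where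
  "Lp_weak_conv p \<Omega> f F \<longleftrightarrow> (\<forall>k. f k \<in> Lp p \<Omega>) \<and> F \<in> Lp p \<Omega> \<and>
     (\<forall>h\<in>Lp (p / (p - 1)) \<Omega>.
        (\<lambda>k. integral\<^sup>L (lebesgue_on \<Omega>) (\<lambda>x. f k x \<bullet> h x))
          \<longlonglongrightarrow> integral\<^sup>L (lebesgue_on \<Omega>) (\<lambda>x. F x \<bullet> h x))"

definition Lp_strong_conv :: "real \<Rightarrow> 'a::euclidean_space set \<Rightarrow> (nat \<Rightarrow> 'a \<Rightarrow> 'b::euclidean_space) \<Rightarrow> ('a \<Rightarrow> 'b) \<Rightarrow> bool" where
  "Lp_strong_conv p \<Omega> f F \<longleftrightarrow> (\<forall>k. f k \<in> Lp p \<Omega>) \<and> F \<in> Lp p \<Omega> \<and>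
     (\<lambda>k. integral\<^sup>L (lebesgue_on \<Omega>) (\<lambda>x. norm (f k x - F x) powr p)) \<longlonglongrightarrow> 0"

definition Mosco_conv :: "real \<Rightarrow> 'a::euclidean_space set \<Rightarrow> (nat \<Rightarrow> ('a \<Rightarrow> 'b::euclidean_space) set) \<Rightarrow> ('a \<Rightarrow> 'b) set \<Rightarrow> bool" where
  "Mosco_conv p \<Omega> A B \<longleftrightarrow>
     (\<forall>r x F. strict_mono r \<and> (\<forall>k. x k \<in> A (r k)) \<and> Lp_weak_conv p \<Omega> x F \<longrightarrow> F \<in> B) \<and>
     (\<forall>F\<in>B. \<exists>x. (\<forall>n. x n \<in> A n) \<and> Lp_strong_conv p \<Omega> x F)"

end

theory Submission
  imports Defs "HOL-Library.Diagonal_Subsequence"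
begin

text \<open>
  Constant functions have zero weak gradient, so for open E \<subseteq> \<Omega> the indicator of E, embedded
  as (1_E, 0), lies in W^{1,p}(E). Testing Mosco convergence with such indicators gives both
  halves of |D_n \<Delta> D| \<rightarrow> 0.

  By (M2), some u_n in W^{1,p}(D_n) converge strongly to (1_D, 0). Since u_n vanishes off D_n,
  it has distance 1 from (1_D, 0) on D - D_n, so |D - D_n| \<le> \<parallel>u_n - (1_D, 0)\<parallel>_p^p \<rightarrow> 0.

  If |D_n - D| \<ge> \<epsilon> along a subsequence, a further subsequence of the indicators 1_{D_n}
  converges weakly, tested against L^1, to some \<theta> with values in [0, 1]: by a diagonal argument
  the integrals of 1_{D_n} over the sets of a countable family approximating all measurable sets
  converge, hence so do those over every measurable set, and the limit set function has a density
  \<theta> by Radon-Nikodym. By (M1), (\<theta>, 0) \<in> W^{1,p}(D), so \<theta> = 0 almost everywhere off D, and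
  |D_n - D|, the integral of 1_{D_n} over \<Omega> - D, tends to the integral of \<theta> over \<Omega> - D, which
  is 0: a contradiction.
\<close>

section \<open>Integrals of derivatives of compactly supported functions\<close>

lemma has_derivative_zero_outside_support:
  fixes \<phi> :: "'a::real_normed_vector \<Rightarrow> 'b::real_normed_vector"
  assumes "(\<phi> has_derivative \<phi>') (at x)" and "x \<notin> closure {x. \<phi> x \<noteq> 0}"
  shows "\<phi>' = (\<lambda>_. 0)"
proof -
  have "((\<lambda>_. 0) has_derivative (\<lambda>_. 0)) (at x)"
    by simp
  then have "(\<phi> has_derivative (\<lambda>_. 0)) (at x)"
    by (rule has_derivative_transform_within_open[where s = "- closure {x. \<phi> x \<noteq> 0}"])
       (use assms(2) in \<open>auto intro: closure_subset[THEN subsetD]\<close>)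
  with assms(1) show ?thesis
    by (rule has_derivative_unique)
qed

lemma has_real_derivative_along_line:
  fixes \<phi> :: "'a::real_normed_vector \<Rightarrow> real"
  assumes "(\<phi> has_derivative \<phi>') (at (x + s *\<^sub>R v))"
  shows "((\<lambda>s. \<phi> (x + s *\<^sub>R v)) has_real_derivative \<phi>' v) (at s)"
proof -
  have "((\<lambda>s. x + s *\<^sub>R v) has_derivative (\<lambda>h. h *\<^sub>R v)) (at s)"
    by (auto intro!: derivative_eq_intros)
  from has_derivative_compose[OF this assms]
  have "((\<lambda>s. \<phi> (x + s *\<^sub>R v)) has_derivative (\<lambda>h. \<phi>' (h *\<^sub>R v))) (at s)" .
  then show ?thesis
    using linear_scale[OF has_derivative_linear[OF assms]]
    by (simp add: has_field_derivative_def mult_commute_abs)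
qed

lemma abs_difference_quotient_le:
  fixes \<phi> :: "'a::real_normed_vector \<Rightarrow> real"
  assumes "\<And>x. (\<phi> has_derivative \<phi>' x) (at x)" and "\<And>x. \<bar>\<phi>' x v\<bar> \<le> C" and "0 < t"
  shows "\<bar>(\<phi> (x + t *\<^sub>R v) - \<phi> x) / t\<bar> \<le> C"
proof -
  obtain z where "\<phi> (x + t *\<^sub>R v) - \<phi> (x + 0 *\<^sub>R v) = (t - 0) * \<phi>' (x + z *\<^sub>R v) v"
    using MVT2[of 0 t "\<lambda>s. \<phi> (x + s *\<^sub>R v)" "\<lambda>s. \<phi>' (x + s *\<^sub>R v) v"] assms(3)
      has_real_derivative_along_line[OF assms(1)] by blast
  then show ?thesis
    using assms(2,3) by simp
qed

lemma difference_quotient_tendsto: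
  fixes \<phi> :: "'a::real_normed_vector \<Rightarrow> real"
  assumes "(\<phi> has_derivative \<phi>') (at x)" and "t \<longlonglongrightarrow> 0" and "\<And>n. t n \<noteq> 0"
  shows "(\<lambda>n. (\<phi> (x + t n *\<^sub>R v) - \<phi> x) / t n) \<longlonglongrightarrow> \<phi>' v"
proof -
  have "((\<lambda>h. (\<phi> (x + h *\<^sub>R v) - \<phi> x) / h) \<longlongrightarrow> \<phi>' v) (at 0)"
    using has_real_derivative_along_line[of \<phi> \<phi>' x 0 v] assms(1) unfolding DERIV_def by simp
  moreover have "\<forall>\<^sub>F n in sequentially. t n \<noteq> 0"
    using assms(3) by simp
  ultimately show ?thesis
    by (rule tendsto_compose_eventually[OF _ assms(2)])
qed

lemma integral_lborel_translate:
  fixes f :: "'a::euclidean_space \<Rightarrow> real"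
  assumes "integrable lborel f"
  shows "integrable lborel (\<lambda>x. f (x + c))" and "(\<integral>x. f (x + c) \<partial>lborel) = (\<integral>x. f x \<partial>lborel)"
proof -
  have f: "f \<in> borel_measurable borel"
    using borel_measurable_integrable[OF assms] by simp
  have shift: "(+) c \<in> lborel \<rightarrow>\<^sub>M borel"
    by simp
  show "integrable lborel (\<lambda>x. f (x + c))" "(\<integral>x. f (x + c) \<partial>lborel) = (\<integral>x. f x \<partial>lborel)"
    using integrable_distr_eq[OF shift f] integral_distr[OF shift f] assms
    by (simp_all add: lborel_distr_plus add.commute)
qed

lemma continuous_compact_support_bounded:
  fixes f :: "'a::topological_space \<Rightarrow> real"
  assumes "continuous_on UNIV f" and "compact K" and "\<And>x. x \<notin> K \<Longrightarrow> f x = 0"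
  obtains C where "\<And>x. \<bar>f x\<bar> \<le> C"
proof -
  have "bounded (f ` K)"
    using assms(1,2) by (intro compact_imp_bounded compact_continuous_image) (auto intro: continuous_on_subset)
  then obtain C where C: "\<And>x. x \<in> K \<Longrightarrow> \<bar>f x\<bar> \<le> C"
    by (auto simp: bounded_iff)
  have "\<bar>f x\<bar> \<le> max C 0" for x
    using C[of x] assms(3)[of x] by (cases "x \<in> K") (auto simp: le_max_iff_disj)
  then show ?thesis
    using that by blast
qed

lemma integrable_lborel_compact_support:
  fixes f :: "'a::euclidean_space \<Rightarrow> real"
  assumes "continuous_on UNIV f" and "compact K" and "\<And>x. x \<notin> K \<Longrightarrow> f x = 0"
  shows "integrable lborel f"
proof -
  have "integrable lborel (\<lambda>x. indicator K x *\<^sub>R f x)"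
    using assms(1,2) by (intro borel_integrable_compact) (auto intro: continuous_on_subset)
  also have "(\<lambda>x. indicator K x *\<^sub>R f x) = f"
    using assms(3) by (auto split: split_indicator)
  finally show ?thesis .
qed

lemma add_notin_if_notin_sums:
  fixes K :: "'a::real_normed_vector set"
  assumes "x \<notin> {y + z |y z. y \<in> K \<and> z \<in> cball 0 r}" and "norm w \<le> r"
  shows "x + w \<notin> K"
proof
  assume "x + w \<in> K"
  moreover have "- w \<in> cball 0 r"
    using assms(2) by simp
  moreover have "x = (x + w) + - w"
    by simp
  ultimately have "x \<in> {y + z |y z. y \<in> K \<and> z \<in> cball 0 r}"
    by blast
  with assms(1) show False ..
qed

lemma abs_difference_quotient_le_indicator:
  fixes \<phi> :: "'a::real_normed_vector \<Rightarrow> real"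
  assumes "\<And>x. (\<phi> has_derivative \<phi>' x) (at x)" and "\<And>x. \<bar>\<phi>' x v\<bar> \<le> C"
    and "\<And>x. x \<notin> K \<Longrightarrow> \<phi> x = 0" and "0 < t" and "t \<le> 1"
  shows "\<bar>(\<phi> (x + t *\<^sub>R v) - \<phi> x) / t\<bar> \<le> C * indicator {y + z |y z. y \<in> K \<and> z \<in> cball 0 (norm v)} x"
proof (cases "x \<in> {y + z |y z. y \<in> K \<and> z \<in> cball 0 (norm v)}")
  case True
  then show ?thesis
    using abs_difference_quotient_le[OF assms(1,2,4)] by simp
next
  case False
  have "x + 0 \<notin> K"
    using False by (rule add_notin_if_notin_sums) simp
  moreover have "x + t *\<^sub>R v \<notin> K"
    using False
    by (rule add_notin_if_notin_sums)
       (simp add: abs_of_pos assms(4) mult_left_le_one_le[OF norm_ge_zero less_imp_le[OF assms(4)] assms(5)])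
  ultimately show ?thesis
    using False assms(3) by simp
qed

lemma integral_directional_derivative_compact_support:
  fixes \<phi> :: "'a::euclidean_space \<Rightarrow> real"
  assumes deriv: "\<And>x. (\<phi> has_derivative \<phi>' x) (at x)"
    and cont: "continuous_on UNIV (\<lambda>x. \<phi>' x v)"
    and supp: "compact (closure {x. \<phi> x \<noteq> 0})"
  shows "(\<integral>x. \<phi>' x v \<partial>lborel) = 0"
proof -
  define K where "K = closure {x. \<phi> x \<noteq> 0}"
  have \<phi>_out: "\<phi> x = 0" if "x \<notin> K" for x
    using that unfolding K_def by (auto intro: closure_subset[THEN subsetD])
  have \<phi>'_out: "\<phi>' x v = 0" if "x \<notin> K" for x
    using has_derivative_zero_outside_support[OF deriv] that unfolding K_def by simp
  obtain C where C: "\<And>x. \<bar>\<phi>' x v\<bar> \<le> C"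
    using continuous_compact_support_bounded[OF cont supp] \<phi>'_out unfolding K_def by blast
  have \<phi>_cont: "continuous_on UNIV \<phi>"
    by (intro continuous_at_imp_continuous_on ballI has_derivative_continuous[OF deriv])
  have \<phi>_meas [measurable]: "\<phi> \<in> borel_measurable borel"
    using \<phi>_cont by (rule borel_measurable_continuous_onI)
  have \<phi>_int: "integrable lborel \<phi>"
    using \<phi>_cont supp \<phi>_out unfolding K_def by (rule integrable_lborel_compact_support)
  \<comment> \<open>Difference quotients along \<open>v\<close> have integral \<open>0\<close> by translation invariance and converge
    to \<open>\<phi>' x v\<close>, dominated by \<open>C\<close> on a neighbourhood \<open>K'\<close> of the support.\<close>
  define q where "q n x = (\<phi> (x + (1 / Suc n) *\<^sub>R v) - \<phi> x) / (1 / Suc n)" for n x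
  define K' where "K' = {y + z |y z. y \<in> K \<and> z \<in> cball 0 (norm v)}"
  have "compact K'"
    unfolding K'_def K_def using supp by (intro compact_sums) auto
  then have "bounded K'" "K' \<in> sets borel"
    by (simp_all add: compact_imp_bounded borel_compact)
  then have K'_int: "integrable lborel (indicator K' :: 'a \<Rightarrow> real)"
    by (intro integrable_real_indicator emeasure_bounded_finite) simp_all
  have q_bound: "\<bar>q n x\<bar> \<le> C * indicator K' x" for n x
    unfolding q_def K'_def using deriv C \<phi>_out
    by (rule abs_difference_quotient_le_indicator) (simp_all add: divide_le_eq)
  have "(\<lambda>n. \<integral>x. q n x \<partial>lborel) \<longlonglongrightarrow> (\<integral>x. \<phi>' x v \<partial>lborel)"
  proof (rule integral_dominated_convergence[where w = "\<lambda>x. C * indicator K' x"])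
    show "(\<lambda>x. \<phi>' x v) \<in> borel_measurable lborel"
      using cont by (simp add: borel_measurable_continuous_onI)
    show "q n \<in> borel_measurable lborel" for n
      unfolding q_def by measurable
    show "AE x in lborel. (\<lambda>n. q n x) \<longlonglongrightarrow> \<phi>' x v"
      unfolding q_def using deriv LIMSEQ_Suc[OF lim_inverse_n']
      by (intro AE_I2 difference_quotient_tendsto) auto
  qed (use K'_int q_bound in auto)
  moreover have "(\<integral>x. q n x \<partial>lborel) = 0" for n
    using \<phi>_int integral_lborel_translate[OF \<phi>_int, of "(1 / Suc n) *\<^sub>R v"] unfolding q_def by simp
  ultimately show ?thesis
    by (simp add: LIMSEQ_const_iff)
qed

lemma integral_partial_derivative_test_fun:
  assumes "\<phi> \<in> test_funs E" and "b \<in> Basis" and "E \<in> sets lebesgue"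
  shows "(\<integral>x. frechet_derivative \<phi> (at x) b \<partial>lebesgue_on E) = 0"
proof -
  have C1: "\<phi> \<in> Ck_fun (Suc 0)"
    using assms(1) unfolding test_funs_def smooth_fun_def by blast
  then have deriv: "(\<phi> has_derivative frechet_derivative \<phi> (at x)) (at x)" for x
    by (simp add: frechet_derivative_works)
  have cont: "continuous_on UNIV (\<lambda>x. frechet_derivative \<phi> (at x) b)"
    using C1 assms(2) by simp
  have supp: "compact (closure {x. \<phi> x \<noteq> 0})" "closure {x. \<phi> x \<noteq> 0} \<subseteq> E"
    using assms(1) unfolding test_funs_def by auto
  have vanish: "frechet_derivative \<phi> (at x) b = 0" if "x \<notin> E" for x
  proof -
    have "x \<notin> closure {x. \<phi> x \<noteq> 0}"
      using that supp(2) by blast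
    then show ?thesis
      using has_derivative_zero_outside_support[OF deriv] by simp
  qed
  have "(\<integral>x. frechet_derivative \<phi> (at x) b \<partial>lebesgue_on E)
      = (\<integral>x. indicator E x *\<^sub>R frechet_derivative \<phi> (at x) b \<partial>lebesgue)"
    using assms(3) by (intro integral_restrict_space) simp
  also have "\<dots> = (\<integral>x. frechet_derivative \<phi> (at x) b \<partial>lebesgue)"
    using vanish by (intro Bochner_Integration.integral_cong) (auto split: split_indicator)
  also have "\<dots> = (\<integral>x. frechet_derivative \<phi> (at x) b \<partial>lborel)"
    using cont by (intro integral_completion) (simp add: borel_measurable_continuous_onI)
  also have "\<dots> = 0"
    using integral_directional_derivative_compact_support[OF deriv cont supp(1)] .
  finally show ?thesis .
qed

section \<open>Lebesgue spaces and Sobolev spaces\<close>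

lemma bounded_measurable_in_Lp:
  fixes f :: "'a::euclidean_space \<Rightarrow> 'b::euclidean_space"
  assumes "\<Omega> \<in> lmeasurable" and "f \<in> borel_measurable (lebesgue_on \<Omega>)"
    and "\<And>x. x \<in> \<Omega> \<Longrightarrow> norm (f x) \<le> B" and "0 \<le> p"
  shows "f \<in> Lp p \<Omega>"
proof -
  note [measurable] = assms(2)
  have "integrable (lebesgue_on \<Omega>) (\<lambda>x. norm (f x) powr p)"
  proof (rule finite_measure.integrable_const_bound)
    show "finite_measure (lebesgue_on \<Omega>)"
      using assms(1) by (rule finite_measure_lebesgue_on)
    show "AE x in lebesgue_on \<Omega>. norm (norm (f x) powr p) \<le> B powr p"
      using assms(3,4) by (intro AE_I2) (simp add: powr_mono2)
  qed measurable
  then show ?thesis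
    unfolding Lp_def by simp
qed

lemma powr_add_le:
  fixes a b p :: real
  assumes "0 \<le> a" and "0 \<le> b" and "0 \<le> p"
  shows "(a + b) powr p \<le> 2 powr p * (a powr p + b powr p)"
proof -
  have "(a + b) powr p \<le> (2 * max a b) powr p"
    using assms by (intro powr_mono2) auto
  also have "\<dots> = 2 powr p * max a b powr p"
    using assms by (simp add: powr_mult)
  also have "\<dots> \<le> 2 powr p * (a powr p + b powr p)"
    by (intro mult_left_mono) (auto simp: max_def)
  finally show ?thesis .
qed

lemma Lp_diff_integrable:
  fixes f g :: "'a::euclidean_space \<Rightarrow> 'b::euclidean_space"
  assumes "f \<in> Lp p \<Omega>" and "g \<in> Lp p \<Omega>" and "0 \<le> p"
  shows "integrable (lebesgue_on \<Omega>) (\<lambda>x. norm (f x - g x) powr p)"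
proof (rule Bochner_Integration.integrable_bound)
  show "integrable (lebesgue_on \<Omega>) (\<lambda>x. 2 powr p * (norm (f x) powr p + norm (g x) powr p))"
    using assms(1,2) unfolding Lp_def by auto
  have [measurable]: "f \<in> borel_measurable (lebesgue_on \<Omega>)" "g \<in> borel_measurable (lebesgue_on \<Omega>)"
    using assms(1,2) unfolding Lp_def by auto
  show "(\<lambda>x. norm (f x - g x) powr p) \<in> borel_measurable (lebesgue_on \<Omega>)"
    by measurable
  have "norm (f x - g x) powr p \<le> 2 powr p * (norm (f x) powr p + norm (g x) powr p)" for x
  proof -
    have "norm (f x - g x) powr p \<le> (norm (f x) + norm (g x)) powr p"
      using assms(3) by (intro powr_mono2) (auto simp: norm_triangle_ineq4)
    also have "\<dots> \<le> 2 powr p * (norm (f x) powr p + norm (g x) powr p)"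
      using assms(3) by (intro powr_add_le) auto
    finally show ?thesis .
  qed
  then show "AE x in lebesgue_on \<Omega>. norm (norm (f x - g x) powr p)
      \<le> norm (2 powr p * (norm (f x) powr p + norm (g x) powr p))"
    by (intro AE_I2) simp
qed

lemma Lp_imp_integrable:
  fixes h :: "'a::euclidean_space \<Rightarrow> 'b::euclidean_space"
  assumes "h \<in> Lp q \<Omega>" and "1 \<le> q" and "\<Omega> \<in> lmeasurable"
  shows "integrable (lebesgue_on \<Omega>) h"
proof (rule Bochner_Integration.integrable_bound)
  have "finite_measure (lebesgue_on \<Omega>)"
    using assms(3) by (rule finite_measure_lebesgue_on)
  then show "integrable (lebesgue_on \<Omega>) (\<lambda>x. 1 + norm (h x) powr q)"
    using assms(1) finite_measure.integrable_const unfolding Lp_def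
    by (intro Bochner_Integration.integrable_add) auto
  show "h \<in> borel_measurable (lebesgue_on \<Omega>)"
    using assms(1) unfolding Lp_def by auto
  have "norm (h x) \<le> 1 + norm (h x) powr q" for x
  proof (cases "norm (h x) \<le> 1")
    case False
    then have "norm (h x) powr 1 \<le> norm (h x) powr q"
      using assms(2) by (intro powr_mono) auto
    then show ?thesis
      using False by simp
  qed (simp add: add_increasing2)
  then show "AE x in lebesgue_on \<Omega>. norm (h x) \<le> norm (1 + norm (h x) powr q)"
    by (intro AE_I2) simp
qed

lemma indicator_in_W1p_emb:
  fixes \<Omega> E :: "'a::euclidean_space set"
  assumes "open E" and "E \<subseteq> \<Omega>" and "\<Omega> \<in> lmeasurable" and "0 \<le> p"
  shows "(\<lambda>x. (indicator E x, 0::'a)) \<in> W1p_emb p \<Omega> E"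
proof -
  have E: "E \<in> sets lebesgue" "E \<in> lmeasurable"
    using assms(1-3) by (auto intro: fmeasurableI2)
  have "(\<lambda>x. (indicator E x :: real, 0::'a)) \<in> Lp p \<Omega>"
    using assms(3,4) E(1)
    by (intro bounded_measurable_in_Lp[where B = 1] measurable_restrict_space1)
       (auto split: split_indicator)
  moreover have "(\<lambda>_. 1::real) \<in> Lp p E" "(\<lambda>_. 0::'a) \<in> Lp p E"
    using E(2) assms(4) by (auto intro!: bounded_measurable_in_Lp[where B = 1])
  then have "(\<lambda>_. 1::real, \<lambda>_. 0::'a) \<in> W1p p E"
    using E(1) integral_partial_derivative_test_fun
    unfolding W1p_def weak_gradient_def by auto
  moreover have "AE x in lebesgue_on \<Omega>. (indicator E x :: real, 0::'a) = (if x \<in> E then (1, 0) else 0)"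
    by (simp add: zero_prod_def)
  ultimately show ?thesis
    unfolding W1p_emb_def by blast
qed

lemma W1p_emb_vanishes_outside:
  assumes "F \<in> W1p_emb p \<Omega> E"
  shows "AE x in lebesgue_on \<Omega>. x \<notin> E \<longrightarrow> F x = 0"
  using assms unfolding W1p_emb_def by (auto elim!: AE_mp)

lemma integral_indicator_lebesgue_on:
  fixes \<Omega> X :: "'a::euclidean_space set"
  assumes "\<Omega> \<in> lmeasurable" and "X \<in> sets lebesgue" and "X \<subseteq> \<Omega>"
  shows "integrable (lebesgue_on \<Omega>) (indicator X :: 'a \<Rightarrow> real)"
    and "(\<integral>x. indicator X x \<partial>lebesgue_on \<Omega>) = measure lebesgue X"
proof -
  interpret finite_measure "lebesgue_on \<Omega>"
    using assms(1) by (rule finite_measure_lebesgue_on)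
  have "X \<in> sets (lebesgue_on \<Omega>)"
    using assms by (auto simp: sets_restrict_space_iff)
  then show "integrable (lebesgue_on \<Omega>) (indicator X :: 'a \<Rightarrow> real)"
    by (simp add: less_top[symmetric])
  have "(\<integral>x. indicator X x \<partial>lebesgue_on \<Omega>) = measure (lebesgue_on \<Omega>) X"
    using assms(3) by (simp add: Int_absorb2)
  also have "\<dots> = measure lebesgue X"
    using assms by (intro measure_restrict_space) auto
  finally show "(\<integral>x. indicator X x \<partial>lebesgue_on \<Omega>) = measure lebesgue X" .
qed

section \<open>Weak sequential compactness of functions with values in [0,1]\<close>

lemma integrable_bounded_mult:
  fixes g h :: "'a \<Rightarrow> real"
  assumes "g \<in> borel_measurable M" and "\<And>x. \<bar>g x\<bar> \<le> 1" and "integrable M h"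
  shows "integrable M (\<lambda>x. g x * h x)"
proof (rule Bochner_Integration.integrable_bound[OF assms(3)])
  show "(\<lambda>x. g x * h x) \<in> borel_measurable M"
    using assms(1) borel_measurable_integrable[OF assms(3)] by measurable
  show "AE x in M. norm (g x * h x) \<le> norm (h x)"
    using assms(2) by (auto simp: abs_mult intro!: mult_left_le_one_le)
qed

lemma abs_integral_bounded_mult_diff_le:
  fixes g u v :: "'a \<Rightarrow> real"
  assumes "g \<in> borel_measurable M" and "\<And>x. \<bar>g x\<bar> \<le> 1"
    and "integrable M u" and "integrable M v"
  shows "\<bar>(\<integral>x. g x * u x \<partial>M) - (\<integral>x. g x * v x \<partial>M)\<bar> \<le> (\<integral>x. \<bar>u x - v x\<bar> \<partial>M)"
proof -
  have uv: "integrable M (\<lambda>x. g x * (u x - v x))"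
    using assms by (intro integrable_bounded_mult) auto
  have "integrable M (\<lambda>x. g x * u x)" "integrable M (\<lambda>x. g x * v x)"
    using assms by (auto intro: integrable_bounded_mult)
  then have "(\<integral>x. g x * u x \<partial>M) - (\<integral>x. g x * v x \<partial>M) = (\<integral>x. g x * (u x - v x) \<partial>M)"
    by (simp add: right_diff_distrib)
  also have "\<bar>\<dots>\<bar> \<le> (\<integral>x. \<bar>g x * (u x - v x)\<bar> \<partial>M)"
    using integral_norm_bound[of M "\<lambda>x. g x * (u x - v x)"] by simp
  also have "\<dots> \<le> (\<integral>x. \<bar>u x - v x\<bar> \<partial>M)"
  proof (rule integral_mono)
    show "integrable M (\<lambda>x. \<bar>g x * (u x - v x)\<bar>)" "integrable M (\<lambda>x. \<bar>u x - v x\<bar>)"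
      using uv assms(3,4) by auto
    show "\<bar>g x * (u x - v x)\<bar> \<le> \<bar>u x - v x\<bar>" for x
      using assms(2)[of x] by (simp add: abs_mult mult_left_le_one_le)
  qed
  finally show ?thesis .
qed

lemma abs_integral_mult_indicator_diff_le:
  fixes g :: "'a \<Rightarrow> real"
  assumes "finite_measure M" and "g \<in> borel_measurable M" and "\<And>x. \<bar>g x\<bar> \<le> 1"
    and "A \<in> sets M" and "B \<in> sets M"
  shows "\<bar>(\<integral>x. g x * indicator A x \<partial>M) - (\<integral>x. g x * indicator B x \<partial>M)\<bar>
    \<le> measure M (A - B) + measure M (B - A)"
proof -
  interpret finite_measure M
    by (rule assms(1))
  have "\<bar>(\<integral>x. g x * indicator A x \<partial>M) - (\<integral>x. g x * indicator B x \<partial>M)\<bar>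
      \<le> (\<integral>x. \<bar>indicator A x - indicator B x\<bar> \<partial>M)"
    using assms
    by (intro abs_integral_bounded_mult_diff_le integrable_real_indicator) (auto simp: less_top[symmetric])
  also have "(\<lambda>x. \<bar>indicator A x - indicator B x\<bar>) = (\<lambda>x. indicator (A - B) x + indicator (B - A) x :: real)"
    by (auto split: split_indicator)
  also have "(\<integral>x. indicator (A - B) x + indicator (B - A) x \<partial>M) = measure M (A - B) + measure M (B - A)"
    using assms(4,5)
    by (subst Bochner_Integration.integral_add) (auto simp: less_top[symmetric])
  finally show ?thesis .
qed

lemma integral_mult_indicator_bounds:
  fixes f :: "'a \<Rightarrow> real"
  assumes "finite_measure M" and "f \<in> borel_measurable M" and "\<And>x. 0 \<le> f x" and "\<And>x. f x \<le> 1"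
    and "A \<in> sets M"
  shows "0 \<le> (\<integral>x. f x * indicator A x \<partial>M)" and "(\<integral>x. f x * indicator A x \<partial>M) \<le> measure M A"
proof -
  interpret finite_measure M
    by (rule assms(1))
  show "0 \<le> (\<integral>x. f x * indicator A x \<partial>M)"
    using assms(3) by (simp add: integral_nonneg_AE)
  have A_int: "integrable M (indicator A :: 'a \<Rightarrow> real)"
    using assms(5) by (simp add: less_top[symmetric])
  then have "integrable M (\<lambda>x. f x * indicator A x)"
    using assms(2-4) by (intro integrable_bounded_mult) (auto simp: abs_le_iff)
  then have "(\<integral>x. f x * indicator A x \<partial>M) \<le> (\<integral>x. indicator A x \<partial>M)"
    using A_int assms(4) by (intro integral_mono) (auto split: split_indicator)
  then show "(\<integral>x. f x * indicator A x \<partial>M) \<le> measure M A"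
    using assms(5) by simp
qed

lemma integral_mult_indicator_Un:
  fixes f :: "'a \<Rightarrow> real"
  assumes "finite_measure M" and "f \<in> borel_measurable M" and "\<And>x. \<bar>f x\<bar> \<le> 1"
    and "A \<in> sets M" and "B \<in> sets M" and "A \<inter> B = {}"
  shows "(\<integral>x. f x * indicator (A \<union> B) x \<partial>M) = (\<integral>x. f x * indicator A x \<partial>M) + (\<integral>x. f x * indicator B x \<partial>M)"
proof -
  interpret finite_measure M
    by (rule assms(1))
  have "integrable M (\<lambda>x. f x * indicator X x)" if "X \<in> sets M" for X
    using assms(2,3) that by (intro integrable_bounded_mult) (auto simp: less_top[symmetric])
  moreover have "(\<lambda>x. f x * indicator (A \<union> B) x) = (\<lambda>x. f x * indicator A x + f x * indicator B x)"
    using assms(6) by (auto simp: indicator_def fun_eq_iff)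
  ultimately show ?thesis
    using assms(4,5) by simp
qed

lemma countable_diagonal_convergent_subseq:
  fixes a :: "nat \<Rightarrow> 'b \<Rightarrow> real"
  assumes "countable G" and "\<And>B. B \<in> G \<Longrightarrow> bounded (range (\<lambda>k. a k B))"
  obtains s where "strict_mono s" and "\<And>B. B \<in> G \<Longrightarrow> convergent (\<lambda>k. a (s k) B)"
proof (cases "G = {}")
  case True
  then show ?thesis
    using that[of id] by (simp add: strict_mono_id)
next
  case False
  define g where "g = from_nat_into G"
  interpret subseqs "\<lambda>j s. convergent (\<lambda>k. a (s k) (g j))"
  proof
    fix j and s :: "nat \<Rightarrow> nat"
    have "bounded (range (\<lambda>k. a k (g j)))"
      using assms(2) from_nat_into[OF False] unfolding g_def by blast
    then have "bounded (range (\<lambda>k. a (s k) (g j)))"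
      by (rule bounded_subset) auto
    then obtain l r where "strict_mono r" "((\<lambda>k. a (s k) (g j)) \<circ> r) \<longlonglongrightarrow> l"
      using bounded_imp_convergent_subsequence by blast
    then show "\<exists>r. strict_mono r \<and> convergent (\<lambda>k. a ((s \<circ> r) k) (g j))"
      by (auto simp: convergent_def comp_def)
  qed
  have tail: "convergent (\<lambda>k. a ((diagseq \<circ> (+) (Suc j)) k) (g j))" for j
  proof (rule diagseq_holds)
    fix r s n
    assume "strict_mono (r :: nat \<Rightarrow> nat)" "convergent (\<lambda>k. a (s k) (g n))"
    then show "convergent (\<lambda>k. a ((s \<circ> r) k) (g n))"
      using LIMSEQ_subseq_LIMSEQ unfolding convergent_def comp_def by blast
  qed
  have "convergent (\<lambda>k. a (diagseq (k + Suc j)) (g j))" for j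
    using tail[of j] unfolding comp_def by (simp only: add.commute)
  then have "convergent (\<lambda>k. a (diagseq k) (g j))" for j
    by (rule convergent_ignore_initial_segment[THEN iffD1])
  moreover have "B \<in> G \<Longrightarrow> \<exists>j. B = g j" for B
    unfolding g_def using assms(1) by (metis from_nat_into_surj)
  ultimately show ?thesis
    using that subseq_diagseq by blast
qed

lemma convergent_by_uniform_approximation:
  fixes a :: "nat \<Rightarrow> real"
  assumes "\<And>e. 0 < e \<Longrightarrow> \<exists>b. convergent b \<and> (\<forall>k. \<bar>a k - b k\<bar> \<le> e)"
  shows "convergent a"
proof -
  have "Cauchy a"
  proof (rule metric_CauchyI)
    fix e :: real
    assume "0 < e"
    then obtain b where b: "convergent b" "\<And>k. \<bar>a k - b k\<bar> \<le> e / 3"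
      using assms[of "e / 3"] by auto
    moreover have "0 < e / 3"
      using \<open>0 < e\<close> by simp
    ultimately obtain N where N: "\<forall>m\<ge>N. \<forall>n\<ge>N. dist (b m) (b n) < e / 3"
      using Cauchy_convergent_iff metric_CauchyD by blast
    have "dist (a m) (a n) < e" if "N \<le> m" "N \<le> n" for m n
    proof -
      have "\<bar>b m - b n\<bar> < e / 3"
        using N that by (auto simp: dist_real_def)
      then show ?thesis
        using b(2)[of m] b(2)[of n] unfolding dist_real_def by linarith
    qed
    then show "\<exists>N. \<forall>m\<ge>N. \<forall>n\<ge>N. dist (a m) (a n) < e"
      by blast
  qed
  then show ?thesis
    by (simp add: Cauchy_convergent_iff)
qed

lemma convergent_integral_mult_indicator_subseq:
  fixes f :: "nat \<Rightarrow> 'a \<Rightarrow> real"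
  assumes M: "finite_measure M"
    and G: "countable G" "G \<subseteq> sets M"
    and approx: "\<And>A e. A \<in> sets M \<Longrightarrow> 0 < e \<Longrightarrow> \<exists>B\<in>G. measure M (A - B) + measure M (B - A) < e"
    and f: "\<And>k. f k \<in> borel_measurable M" "\<And>k x. 0 \<le> f k x" "\<And>k x. f k x \<le> 1"
  obtains s where "strict_mono s"
    and "\<And>A. A \<in> sets M \<Longrightarrow> convergent (\<lambda>k. \<integral>x. f (s k) x * indicator A x \<partial>M)"
proof -
  have f_abs: "\<bar>f k x\<bar> \<le> 1" for k x
    using f(2,3)[of k x] by simp
  define c where "c k A = (\<integral>x. f k x * indicator A x \<partial>M)" for k A
  have "bounded (range (\<lambda>k. c k B))" if "B \<in> G" for B
    using integral_mult_indicator_bounds[OF M f] G(2) that unfolding c_def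
    by (intro boundedI[where B = "measure M B"]) auto
  then obtain s where s: "strict_mono s" "\<And>B. B \<in> G \<Longrightarrow> convergent (\<lambda>k. c (s k) B)"
    using countable_diagonal_convergent_subseq[OF G(1)] by blast
  \<comment> \<open>\<open>c k\<close> is 1-Lipschitz for the measure of the symmetric difference, uniformly in \<open>k\<close>,
    so convergence on the approximating family \<open>G\<close> propagates to all measurable sets\<close>
  have "convergent (\<lambda>k. c (s k) A)" if A: "A \<in> sets M" for A
  proof (rule convergent_by_uniform_approximation)
    fix e :: real
    assume "0 < e"
    then obtain B where B: "B \<in> G" "measure M (A - B) + measure M (B - A) < e"
      using approx[OF A] by blast
    then have "B \<in> sets M"
      using G(2) by auto
    have "\<bar>c (s k) A - c (s k) B\<bar> \<le> e" for k
      using abs_integral_mult_indicator_diff_le[OF M f(1)[of "s k"] f_abs[of "s k"] A \<open>B \<in> sets M\<close>] B(2)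
      unfolding c_def by linarith
    then show "\<exists>b. convergent b \<and> (\<forall>k. \<bar>c (s k) A - b k\<bar> \<le> e)"
      using s(2)[OF B(1)] by blast
  qed
  with s(1) show ?thesis
    using that unfolding c_def by blast
qed

lemma tendsto_by_uniform_approximation:
  fixes a :: "nat \<Rightarrow> real"
  assumes "\<And>i. b i \<longlonglongrightarrow> \<beta> i" and "\<delta> \<longlonglongrightarrow> 0"
    and "\<And>i k. \<bar>a k - b i k\<bar> \<le> \<delta> i" and "\<And>i. \<bar>\<beta> i - \<alpha>\<bar> \<le> \<delta> i"
  shows "a \<longlonglongrightarrow> \<alpha>"
proof (rule LIMSEQ_I)
  fix r :: real
  assume "0 < r"
  then have r3: "0 < r / 3"
    by simp
  obtain i where "\<forall>n\<ge>i. norm (\<delta> n - 0) < r / 3"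
    using LIMSEQ_D[OF assms(2) r3] by blast
  then have i: "\<delta> i < r / 3"
    by auto
  obtain N where N: "\<forall>k\<ge>N. norm (b i k - \<beta> i) < r / 3"
    using LIMSEQ_D[OF assms(1) r3] by blast
  have "\<bar>a k - \<alpha>\<bar> < r" if "N \<le> k" for k
  proof -
    have "\<bar>b i k - \<beta> i\<bar> < r / 3"
      using N that by auto
    then show ?thesis
      using assms(3)[where i = i and k = k] assms(4)[of i] i by linarith
  qed
  then show "\<exists>N. \<forall>k\<ge>N. norm (a k - \<alpha>) < r"
    by auto
qed

lemma integral_abs_diff_tendsto_0:
  fixes h w :: "'a \<Rightarrow> real"
  assumes "integrable M h" and "integrable M w" and "\<And>i. s i \<in> borel_measurable M"
    and "\<And>x. x \<in> space M \<Longrightarrow> (\<lambda>i. s i x) \<longlonglongrightarrow> h x"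
    and "\<And>i x. x \<in> space M \<Longrightarrow> \<bar>s i x\<bar> \<le> w x"
  shows "(\<lambda>i. \<integral>x. \<bar>h x - s i x\<bar> \<partial>M) \<longlonglongrightarrow> 0"
proof -
  have "(\<lambda>i. \<integral>x. \<bar>h x - s i x\<bar> \<partial>M) \<longlonglongrightarrow> (\<integral>x. 0 \<partial>M)"
  proof (rule integral_dominated_convergence[where w = "\<lambda>x. \<bar>h x\<bar> + w x"])
    show "AE x in M. (\<lambda>i. \<bar>h x - s i x\<bar>) \<longlonglongrightarrow> 0"
    proof (rule AE_I2)
      fix x
      assume "x \<in> space M"
      then have "(\<lambda>i. h x - s i x) \<longlonglongrightarrow> h x - h x"
        using assms(4) by (intro tendsto_diff tendsto_const)
      then show "(\<lambda>i. \<bar>h x - s i x\<bar>) \<longlonglongrightarrow> 0"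
        by (simp add: tendsto_rabs_zero_iff)
    qed
    show "AE x in M. norm \<bar>h x - s i x\<bar> \<le> \<bar>h x\<bar> + w x" for i
    proof (rule AE_I2)
      fix x
      assume "x \<in> space M"
      then have "\<bar>s i x\<bar> \<le> w x"
        by (rule assms(5))
      then show "norm \<bar>h x - s i x\<bar> \<le> \<bar>h x\<bar> + w x"
        by simp
    qed
  qed (use assms(1-3) in auto)
  then show ?thesis
    by simp
qed

lemma weak_convergence_from_indicators:
  fixes g :: "nat \<Rightarrow> 'a \<Rightarrow> real" and \<theta> h :: "'a \<Rightarrow> real"
  assumes g: "\<And>k. g k \<in> borel_measurable M" "\<And>k x. \<bar>g k x\<bar> \<le> 1"
    and \<theta>: "\<theta> \<in> borel_measurable M" "\<And>x. \<bar>\<theta> x\<bar> \<le> 1"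
    and indicators: "\<And>A. A \<in> sets M \<Longrightarrow> emeasure M A < \<infinity> \<Longrightarrow>
      (\<lambda>k. \<integral>x. g k x * indicator A x \<partial>M) \<longlonglongrightarrow> (\<integral>x. \<theta> x * indicator A x \<partial>M)"
    and "integrable M h"
  shows "(\<lambda>k. \<integral>x. g k x * h x \<partial>M) \<longlonglongrightarrow> (\<integral>x. \<theta> x * h x \<partial>M)"
  using \<open>integrable M h\<close>
proof (induct rule: integrable_induct)
  case (base A c)
  then show ?case
    using tendsto_mult_right[OF indicators[OF base], of c] by (simp add: mult.assoc[symmetric])
next
  case (add u v)
  then show ?case
    using tendsto_add[OF add(2,4)] g \<theta>
    by (simp add: distrib_left integrable_bounded_mult)
next
  case (lim h s)
  have L1: "(\<lambda>i. \<integral>x. \<bar>h x - s i x\<bar> \<partial>M) \<longlonglongrightarrow> 0"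
    using lim by (intro integral_abs_diff_tendsto_0[where w = "\<lambda>x. 2 * \<bar>h x\<bar>"]) auto
  show ?case
  proof (rule tendsto_by_uniform_approximation[OF lim(2) L1])
    show "\<bar>(\<integral>x. g k x * h x \<partial>M) - (\<integral>x. g k x * s i x \<partial>M)\<bar> \<le> (\<integral>x. \<bar>h x - s i x\<bar> \<partial>M)"
      for i k
      using g(1)[of k] g(2)[of k] lim(5) lim(1)[of i] by (rule abs_integral_bounded_mult_diff_le)
    have "\<bar>(\<integral>x. \<theta> x * h x \<partial>M) - (\<integral>x. \<theta> x * s i x \<partial>M)\<bar> \<le> (\<integral>x. \<bar>h x - s i x\<bar> \<partial>M)"
      for i
      using \<theta> lim(5) lim(1)[of i] by (rule abs_integral_bounded_mult_diff_le)
    then show "\<bar>(\<integral>x. \<theta> x * s i x \<partial>M) - (\<integral>x. \<theta> x * h x \<partial>M)\<bar> \<le> (\<integral>x. \<bar>h x - s i x\<bar> \<partial>M)"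
      for i
      by (simp add: abs_minus_commute)
  qed
qed

lemma AE_le_one_if_set_integrals_le:
  fixes \<theta> :: "'a \<Rightarrow> real"
  assumes "finite_measure M" and "\<theta> \<in> borel_measurable M"
    and "\<And>A. A \<in> sets M \<Longrightarrow> integrable M (\<lambda>x. \<theta> x * indicator A x)"
    and "\<And>A. A \<in> sets M \<Longrightarrow> (\<integral>x. \<theta> x * indicator A x \<partial>M) \<le> measure M A"
  shows "AE x in M. \<theta> x \<le> 1"
proof -
  interpret finite_measure M
    by (rule assms(1))
  define S where "S = {x \<in> space M. 1 < \<theta> x}"
  have S: "S \<in> sets M"
    unfolding S_def using assms(2) by measurable
  have S_int: "integrable M (indicator S :: 'a \<Rightarrow> real)"
    using S by (simp add: less_top[symmetric])
  have excess_int: "integrable M (\<lambda>x. (\<theta> x - 1) * indicator S x)"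
    using assms(3)[OF S] S_int by (simp add: left_diff_distrib)
  have nonneg: "AE x in M. 0 \<le> (\<theta> x - 1) * indicator S x"
    by (auto simp: S_def split: split_indicator)
  have "(\<integral>x. (\<theta> x - 1) * indicator S x \<partial>M) = (\<integral>x. \<theta> x * indicator S x \<partial>M) - measure M S"
    using assms(3)[OF S] S_int S by (simp add: left_diff_distrib)
  also have "\<dots> \<le> 0"
    using assms(4)[OF S] by simp
  finally have "(\<integral>x. (\<theta> x - 1) * indicator S x \<partial>M) = 0"
    using integral_nonneg_AE[OF nonneg] by linarith
  then have "AE x in M. (\<theta> x - 1) * indicator S x = 0"
    using integral_nonneg_eq_0_iff_AE[OF excess_int nonneg] by simp
  then show ?thesis
    by (rule AE_mp) (auto intro!: AE_I2 simp: S_def split: split_indicator)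
qed

lemma dominated_additive_set_function_countably_additive:
  fixes \<nu> :: "'a set \<Rightarrow> real"
  assumes M: "finite_measure M"
    and nonneg: "\<And>A. A \<in> sets M \<Longrightarrow> 0 \<le> \<nu> A"
    and dominated: "\<And>A. A \<in> sets M \<Longrightarrow> \<nu> A \<le> measure M A"
    and additive: "\<And>A B. A \<in> sets M \<Longrightarrow> B \<in> sets M \<Longrightarrow> A \<inter> B = {} \<Longrightarrow> \<nu> (A \<union> B) = \<nu> A + \<nu> B"
  shows "countably_additive (sets M) (\<lambda>A. ennreal (\<nu> A))"
proof -
  interpret finite_measure M
    by (rule M)
  have pos: "positive (sets M) (\<lambda>A. ennreal (\<nu> A))"
    using additive[of "{}" "{}"] by (simp add: positive_def)
  show ?thesis
  proof (rule sets.empty_continuous_imp_countably_additive[OF pos])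
    show "Measure_Space.additive (sets M) (\<lambda>A. ennreal (\<nu> A))"
      using additive nonneg by (simp add: Measure_Space.additive_def ennreal_plus)
    show "\<forall>A\<in>sets M. ennreal (\<nu> A) \<noteq> \<infinity>"
      by simp
  next
    fix A :: "nat \<Rightarrow> 'a set"
    assume A: "range A \<subseteq> sets M" "decseq A" "(\<Inter>i. A i) = {}"
    then have lim: "(\<lambda>i. measure M (A i)) \<longlonglongrightarrow> 0"
      using finite_Lim_measure_decseq[of A] by simp
    have A_sets: "A i \<in> sets M" for i
      using A(1) by auto
    have "(\<lambda>i. \<nu> (A i)) \<longlonglongrightarrow> 0"
    proof (rule real_tendsto_sandwich[OF _ _ tendsto_const lim])
      show "\<forall>\<^sub>F i in sequentially. 0 \<le> \<nu> (A i)"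
        using nonneg[OF A_sets] by simp
      show "\<forall>\<^sub>F i in sequentially. \<nu> (A i) \<le> measure M (A i)"
        using dominated[OF A_sets] by simp
    qed
    then show "(\<lambda>i. ennreal (\<nu> (A i))) \<longlonglongrightarrow> 0"
      using tendsto_ennrealI[of _ 0] by simp
  qed
qed

lemma dominated_additive_set_function_measure:
  fixes \<nu> :: "'a set \<Rightarrow> real"
  assumes M: "finite_measure M"
    and nonneg: "\<And>A. A \<in> sets M \<Longrightarrow> 0 \<le> \<nu> A"
    and dominated: "\<And>A. A \<in> sets M \<Longrightarrow> \<nu> A \<le> measure M A"
    and additive: "\<And>A B. A \<in> sets M \<Longrightarrow> B \<in> sets M \<Longrightarrow> A \<inter> B = {} \<Longrightarrow> \<nu> (A \<union> B) = \<nu> A + \<nu> B"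
  obtains N where "finite_measure N" and "sets N = sets M" and "absolutely_continuous M N"
    and "\<And>A. A \<in> sets M \<Longrightarrow> measure N A = \<nu> A"
proof -
  interpret finite_measure M
    by (rule M)
  have pos: "positive (sets M) (\<lambda>A. ennreal (\<nu> A))"
    using additive[of "{}" "{}"] by (simp add: positive_def)
  have ca: "countably_additive (sets M) (\<lambda>A. ennreal (\<nu> A))"
    using dominated_additive_set_function_countably_additive[OF assms] .
  define N where "N = measure_of (space M) (sets M) (\<lambda>A. ennreal (\<nu> A))"
  have sets_N: "sets N = sets M"
    unfolding N_def by simp
  have measure_N: "emeasure N A = \<nu> A" "measure N A = \<nu> A" if "A \<in> sets M" for A
    using emeasure_measure_of_sigma[OF sets.sigma_algebra_axioms pos ca that] nonneg[OF that]
    unfolding N_def measure_def by simp_all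
  have "finite_measure N"
    by (rule finite_measureI) (simp add: measure_N sets_eq_imp_space_eq[OF sets_N])
  moreover have "absolutely_continuous M N"
    unfolding absolutely_continuous_def
  proof
    fix A
    assume "A \<in> null_sets M"
    then have "A \<in> sets M" "\<nu> A = 0"
      using dominated[of A] nonneg[of A] by (auto simp: measure_def null_sets_def)
    then show "A \<in> null_sets N"
      using measure_N sets_N by (auto simp: null_sets_def)
  qed
  ultimately show ?thesis
    using that sets_N measure_N(2) by blast
qed

lemma dominated_additive_set_function_has_density:
  fixes \<nu> :: "'a set \<Rightarrow> real"
  assumes M: "finite_measure M"
    and nonneg: "\<And>A. A \<in> sets M \<Longrightarrow> 0 \<le> \<nu> A"
    and dominated: "\<And>A. A \<in> sets M \<Longrightarrow> \<nu> A \<le> measure M A"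
    and additive: "\<And>A B. A \<in> sets M \<Longrightarrow> B \<in> sets M \<Longrightarrow> A \<inter> B = {} \<Longrightarrow> \<nu> (A \<union> B) = \<nu> A + \<nu> B"
  obtains \<theta> where "\<theta> \<in> borel_measurable M" and "\<And>x. 0 \<le> \<theta> x" and "\<And>x. \<theta> x \<le> 1"
    and "\<And>A. A \<in> sets M \<Longrightarrow> (\<integral>x. \<theta> x * indicator A x \<partial>M) = \<nu> A"
proof -
  obtain N where N: "finite_measure N" and sets_N: "sets N = sets M" and ac: "absolutely_continuous M N"
    and measure_N: "\<And>A. A \<in> sets M \<Longrightarrow> measure N A = \<nu> A"
    using dominated_additive_set_function_measure[OF assms] by blast
  interpret N: finite_measure N
    by (rule N)
  interpret finite_measure M
    by (rule M)
  define \<theta>\<^sub>0 where "\<theta>\<^sub>0 x = enn2real (RN_deriv M N x)" for x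
  have \<theta>\<^sub>0_meas: "\<theta>\<^sub>0 \<in> borel_measurable M"
    unfolding \<theta>\<^sub>0_def by measurable
  have \<theta>\<^sub>0_int: "integrable M (\<lambda>x. \<theta>\<^sub>0 x * indicator A x)" "(\<integral>x. \<theta>\<^sub>0 x * indicator A x \<partial>M) = \<nu> A"
    if "A \<in> sets M" for A
    using RN_deriv_integrable[OF N.sigma_finite_measure_axioms ac sets_N, of "indicator A"]
      RN_deriv_integral[OF N.sigma_finite_measure_axioms ac sets_N, of "indicator A"]
      that sets_N measure_N unfolding \<theta>\<^sub>0_def by (auto simp: less_top[symmetric])
  have "AE x in M. \<theta>\<^sub>0 x \<le> 1"
  proof (rule AE_le_one_if_set_integrals_le[OF M \<theta>\<^sub>0_meas \<theta>\<^sub>0_int(1)])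
    show "(\<integral>x. \<theta>\<^sub>0 x * indicator A x \<partial>M) \<le> measure M A" if "A \<in> sets M" for A
      using \<theta>\<^sub>0_int(2)[OF that] dominated[OF that] by simp
  qed
  then have "AE x in M. min (\<theta>\<^sub>0 x) 1 * indicator A x = \<theta>\<^sub>0 x * indicator A x" for A
    by eventually_elim simp
  then have "(\<integral>x. min (\<theta>\<^sub>0 x) 1 * indicator A x \<partial>M) = \<nu> A" if "A \<in> sets M" for A
    using \<theta>\<^sub>0_int(2)[OF that] \<theta>\<^sub>0_meas that by (subst integral_cong_AE) (simp_all, measurable)
  moreover have "(\<lambda>x. min (\<theta>\<^sub>0 x) 1) \<in> borel_measurable M"
    using \<theta>\<^sub>0_meas by measurable
  ultimately show ?thesis
    using that[of "\<lambda>x. min (\<theta>\<^sub>0 x) 1"] by (auto simp: \<theta>\<^sub>0_def)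
qed

theorem unit_interval_valued_weakly_convergent_subseq:
  fixes f :: "nat \<Rightarrow> 'a \<Rightarrow> real"
  assumes M: "finite_measure M"
    and G: "countable G" "G \<subseteq> sets M"
    and approx: "\<And>A e. A \<in> sets M \<Longrightarrow> 0 < e \<Longrightarrow> \<exists>B\<in>G. measure M (A - B) + measure M (B - A) < e"
    and f: "\<And>k. f k \<in> borel_measurable M" "\<And>k x. 0 \<le> f k x" "\<And>k x. f k x \<le> 1"
  obtains s \<theta> where "strict_mono s" and "\<theta> \<in> borel_measurable M" and "\<And>x. 0 \<le> \<theta> x" and "\<And>x. \<theta> x \<le> 1"
    and "\<And>h. integrable M h \<Longrightarrow> (\<lambda>k. \<integral>x. f (s k) x * h x \<partial>M) \<longlonglongrightarrow> (\<integral>x. \<theta> x * h x \<partial>M)"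
proof -
  have f_abs: "\<bar>f k x\<bar> \<le> 1" for k x
    using f(2,3)[of k x] by simp
  obtain s where s: "strict_mono s"
    and conv: "\<And>A. A \<in> sets M \<Longrightarrow> convergent (\<lambda>k. \<integral>x. f (s k) x * indicator A x \<partial>M)"
    using convergent_integral_mult_indicator_subseq[OF M G(1,2), where f = f] approx f by blast
  define \<nu> where "\<nu> A = lim (\<lambda>k. \<integral>x. f (s k) x * indicator A x \<partial>M)" for A
  have \<nu>_lim: "(\<lambda>k. \<integral>x. f (s k) x * indicator A x \<partial>M) \<longlonglongrightarrow> \<nu> A" if "A \<in> sets M" for A
    unfolding \<nu>_def using conv[OF that] by (rule convergent_LIMSEQ_iff[THEN iffD1])
  have \<nu>_bounds: "0 \<le> \<nu> A" "\<nu> A \<le> measure M A" if "A \<in> sets M" for A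
    using \<nu>_lim[OF that] integral_mult_indicator_bounds[OF M f(1) f(2) f(3) that]
    by (auto intro: LIMSEQ_le_const LIMSEQ_le_const2)
  have \<nu>_add: "\<nu> (A \<union> B) = \<nu> A + \<nu> B" if "A \<in> sets M" "B \<in> sets M" "A \<inter> B = {}" for A B
    using \<nu>_lim[of "A \<union> B"] tendsto_add[OF \<nu>_lim[OF that(1)] \<nu>_lim[OF that(2)]]
      integral_mult_indicator_Un[OF M f(1) f_abs that] that
    by (auto intro: LIMSEQ_unique)
  obtain \<theta> where \<theta>: "\<theta> \<in> borel_measurable M" "\<And>x. 0 \<le> \<theta> x" "\<And>x. \<theta> x \<le> 1"
    and \<theta>_\<nu>: "\<And>A. A \<in> sets M \<Longrightarrow> (\<integral>x. \<theta> x * indicator A x \<partial>M) = \<nu> A"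
    using dominated_additive_set_function_has_density[OF M, where \<nu> = \<nu>] \<nu>_bounds \<nu>_add by blast
  have "(\<lambda>k. \<integral>x. f (s k) x * h x \<partial>M) \<longlonglongrightarrow> (\<integral>x. \<theta> x * h x \<partial>M)" if "integrable M h" for h
  proof (rule weak_convergence_from_indicators[OF f(1) f_abs \<theta>(1) _ _ that])
    show "\<bar>\<theta> x\<bar> \<le> 1" for x
      using \<theta>(2,3)[of x] by simp
    show "(\<lambda>k. \<integral>x. f (s k) x * indicator A x \<partial>M) \<longlonglongrightarrow> (\<integral>x. \<theta> x * indicator A x \<partial>M)"
      if "A \<in> sets M" for A
      using \<nu>_lim[OF that] \<theta>_\<nu>[OF that] by simp
  qed
  with s \<theta> show ?thesis
    by (rule that)
qed

lemma (in finite_measure) measure_UN_approx_by_finite: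
  assumes "countable U" and "\<And>C. C \<in> U \<Longrightarrow> g C \<in> sets M" and "0 < e"
  obtains F where "finite F" and "F \<subseteq> U" and "measure M (\<Union>C\<in>U. g C) - measure M (\<Union>C\<in>F. g C) < e"
proof (cases "U = {}")
  case True
  then show ?thesis
    using that[of "{}"] assms(3) by simp
next
  case False
  define u where "u = from_nat_into U"
  have u: "range u = U"
    unfolding u_def using False assms(1) by (rule range_from_nat_into)
  define V where "V n = (\<Union>i<n. g (u i))" for n
  have V_sets: "V n \<in> sets M" for n
    unfolding V_def using u assms(2) by blast
  have "(\<lambda>n. measure M (V n)) \<longlonglongrightarrow> measure M (\<Union>n. V n)"
    using V_sets by (intro finite_Lim_measure_incseq) (fastforce simp: incseq_def V_def)+
  also have "(\<Union>n. V n) = (\<Union>C\<in>U. g C)"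
    unfolding V_def u[symmetric] by fastforce
  finally obtain n where "norm (measure M (V n) - measure M (\<Union>C\<in>U. g C)) < e"
    using LIMSEQ_D[of _ _ e] assms(3) by (meson order_refl)
  moreover have "V n = (\<Union>C\<in>u ` {..<n}. g C)"
    unfolding V_def by simp
  ultimately show ?thesis
    using that[of "u ` {..<n}"] u by (auto simp: real_norm_def abs_less_iff)
qed

lemma lebesgue_on_outer_open_approx:
  fixes \<Omega> A :: "'a::euclidean_space set"
  assumes "\<Omega> \<in> sets lebesgue" and "A \<in> sets (lebesgue_on \<Omega>)" and "0 < e"
  obtains T where "open T" and "A \<subseteq> T" and "measure (lebesgue_on \<Omega>) (T \<inter> \<Omega> - A) < e"
proof -
  have A: "A \<subseteq> \<Omega>" "A \<in> sets lebesgue"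
    using assms(1,2) by (auto simp: sets_restrict_space_iff)
  obtain T where T: "open T" "A \<subseteq> T" "T - A \<in> lmeasurable" "emeasure lebesgue (T - A) < e"
    using sets_lebesgue_outer_open[OF A(2) assms(3)] by blast
  have "measure (lebesgue_on \<Omega>) (T \<inter> \<Omega> - A) = measure lebesgue (T \<inter> \<Omega> - A)"
    using assms(1) by (intro measure_restrict_space) auto
  also have "\<dots> \<le> measure lebesgue (T - A)"
    using T(1,3) A assms(1) by (intro measure_mono_fmeasurable) (auto intro!: sets.Diff sets.Int borel_open)
  also have "\<dots> < e"
    using T(3,4) assms(3) by (simp add: emeasure_eq_measure2 ennreal_less_iff)
  finally show ?thesis
    using that T(1,2) by blast
qed

lemma lebesgue_on_approx_by_finite_union:
  fixes \<Omega> A :: "'a::euclidean_space set" and \<B> :: "'a set set"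
  assumes \<Omega>: "\<Omega> \<in> lmeasurable" and \<B>: "countable \<B>" "topological_basis \<B>"
    and A: "A \<in> sets (lebesgue_on \<Omega>)" and "0 < e"
  obtains F where "finite F" and "F \<subseteq> \<B>"
    and "measure (lebesgue_on \<Omega>) (A - \<Union>F \<inter> \<Omega>) + measure (lebesgue_on \<Omega>) (\<Union>F \<inter> \<Omega> - A) < e"
proof -
  let ?M = "lebesgue_on \<Omega>"
  interpret finite_measure ?M
    using \<Omega> by (rule finite_measure_lebesgue_on)
  have \<Omega>_sets: "\<Omega> \<in> sets lebesgue"
    using \<Omega> by auto
  have open_sets: "S \<inter> \<Omega> \<in> sets ?M" if "open S" for S
    using that \<Omega>_sets by (auto simp: sets_restrict_space_iff)
  obtain T where T: "open T" "A \<subseteq> T" "measure ?M (T \<inter> \<Omega> - A) < e / 2"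
    using lebesgue_on_outer_open_approx[OF \<Omega>_sets A, of "e / 2"] \<open>0 < e\<close> by auto
  obtain U where U: "U \<subseteq> \<B>" "T = \<Union>U"
    using \<B>(2) T(1) unfolding topological_basis_def by metis
  have U_sets: "C \<inter> \<Omega> \<in> sets ?M" if "C \<in> U" for C
    using that U(1) topological_basis_open[OF \<B>(2)] by (intro open_sets) blast
  obtain F where F: "finite F" "F \<subseteq> U"
    and close: "measure ?M (\<Union>C\<in>U. C \<inter> \<Omega>) - measure ?M (\<Union>C\<in>F. C \<inter> \<Omega>) < e / 2"
    using measure_UN_approx_by_finite[where g = "\<lambda>C. C \<inter> \<Omega>" and e = "e / 2", OF countable_subset[OF U(1) \<B>(1)]]
      U_sets \<open>0 < e\<close> by auto
  have T\<Omega>: "T \<inter> \<Omega> = (\<Union>C\<in>U. C \<inter> \<Omega>)" and F\<Omega>: "\<Union>F \<inter> \<Omega> = (\<Union>C\<in>F. C \<inter> \<Omega>)"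
    using U(2) by auto
  have F_sets: "\<Union>F \<inter> \<Omega> \<in> sets ?M"
    using F U_sets unfolding F\<Omega> by blast
  have sub: "\<Union>F \<inter> \<Omega> \<subseteq> T \<inter> \<Omega>"
    using F(2) U(2) by auto
  have "measure ?M (A - \<Union>F \<inter> \<Omega>) \<le> measure ?M (T \<inter> \<Omega> - \<Union>F \<inter> \<Omega>)"
    using sets.sets_into_space[OF A] T(2) F_sets open_sets[OF T(1)] by (intro finite_measure_mono) auto
  also have "\<dots> = measure ?M (T \<inter> \<Omega>) - measure ?M (\<Union>F \<inter> \<Omega>)"
    using finite_measure_Diff[OF open_sets[OF T(1)] F_sets sub] .
  finally have "measure ?M (A - \<Union>F \<inter> \<Omega>) < e / 2"
    using close unfolding T\<Omega> F\<Omega> by linarith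
  moreover have "measure ?M (\<Union>F \<inter> \<Omega> - A) \<le> measure ?M (T \<inter> \<Omega> - A)"
    using sub A open_sets[OF T(1)] by (intro finite_measure_mono) auto
  ultimately show ?thesis
    using that[OF F(1)] F(2) U(1) T(3) by auto
qed

lemma lebesgue_on_countable_approximating_family:
  fixes \<Omega> :: "'a::euclidean_space set"
  assumes "\<Omega> \<in> lmeasurable"
  obtains G where "countable G" and "G \<subseteq> sets (lebesgue_on \<Omega>)"
    and "\<And>A e. A \<in> sets (lebesgue_on \<Omega>) \<Longrightarrow> 0 < e \<Longrightarrow>
      \<exists>B\<in>G. measure (lebesgue_on \<Omega>) (A - B) + measure (lebesgue_on \<Omega>) (B - A) < e"
proof -
  obtain \<B> :: "'a set set" where \<B>: "countable \<B>" "topological_basis \<B>"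
    using ex_countable_basis by blast
  define G where "G = (\<lambda>F. \<Union>F \<inter> \<Omega>) ` {F. finite F \<and> F \<subseteq> \<B>}"
  show ?thesis
  proof (rule that)
    show "countable G"
      unfolding G_def using \<B>(1) by (intro countable_image countable_Collect_finite_subset)
    have "\<Union>F \<inter> \<Omega> \<in> sets (lebesgue_on \<Omega>)" if "F \<subseteq> \<B>" for F
    proof -
      have "open (\<Union>F)"
        using that topological_basis_open[OF \<B>(2)] by auto
      then show ?thesis
        using assms by (auto simp: sets_restrict_space_iff)
    qed
    then show "G \<subseteq> sets (lebesgue_on \<Omega>)"
      unfolding G_def by auto
    show "\<exists>B\<in>G. measure (lebesgue_on \<Omega>) (A - B) + measure (lebesgue_on \<Omega>) (B - A) < e"
      if A: "A \<in> sets (lebesgue_on \<Omega>)" and e: "0 < e" for A e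
    proof -
      obtain F where "finite F" "F \<subseteq> \<B>"
        and close: "measure (lebesgue_on \<Omega>) (A - \<Union>F \<inter> \<Omega>) + measure (lebesgue_on \<Omega>) (\<Union>F \<inter> \<Omega> - A) < e"
        using lebesgue_on_approx_by_finite_union[OF assms \<B> A e] by blast
      then have "\<Union>F \<inter> \<Omega> \<in> G"
        unfolding G_def by blast
      with close show ?thesis
        by blast
    qed
  qed
qed

lemma indicators_weakly_convergent_subseq:
  fixes \<Omega> :: "'a::euclidean_space set" and E :: "nat \<Rightarrow> 'a set"
  assumes \<Omega>: "\<Omega> \<in> lmeasurable" and E: "\<And>k. E k \<in> sets lebesgue"
  obtains s and \<theta> :: "'a \<Rightarrow> real" where "strict_mono s" and "\<theta> \<in> borel_measurable (lebesgue_on \<Omega>)"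
    and "\<And>x. 0 \<le> \<theta> x" and "\<And>x. \<theta> x \<le> 1"
    and "\<And>h. integrable (lebesgue_on \<Omega>) h \<Longrightarrow>
      (\<lambda>k. \<integral>x. indicator (E (s k)) x * h x \<partial>lebesgue_on \<Omega>) \<longlonglongrightarrow> (\<integral>x. \<theta> x * h x \<partial>lebesgue_on \<Omega>)"
proof -
  obtain G where G: "countable G" "G \<subseteq> sets (lebesgue_on \<Omega>)"
    and approx: "\<And>A e. A \<in> sets (lebesgue_on \<Omega>) \<Longrightarrow> 0 < e \<Longrightarrow>
      \<exists>B\<in>G. measure (lebesgue_on \<Omega>) (A - B) + measure (lebesgue_on \<Omega>) (B - A) < e"
    using lebesgue_on_countable_approximating_family[OF \<Omega>] by blast
  show ?thesis
  proof (rule unit_interval_valued_weakly_convergent_subseq[OF finite_measure_lebesgue_on[OF \<Omega>] G,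
        where f = "\<lambda>k. indicator (E k)"])
    show "\<exists>B\<in>G. measure (lebesgue_on \<Omega>) (A - B) + measure (lebesgue_on \<Omega>) (B - A) < e"
      if "A \<in> sets (lebesgue_on \<Omega>)" and "0 < e" for A e
      using approx[OF that] .
    show "(indicator (E k) :: 'a \<Rightarrow> real) \<in> borel_measurable (lebesgue_on \<Omega>)" for k
      using E by (intro measurable_restrict_space1) simp
    show "0 \<le> (indicator (E k) x :: real)" "(indicator (E k) x :: real) \<le> 1" for k x
      by (simp_all add: indicator_def)
  qed (fact that)
qed

section \<open>Mosco convergence and measure\<close>

lemma Lp_weak_conv_first_component:
  fixes f :: "nat \<Rightarrow> 'a::euclidean_space \<Rightarrow> real" and \<theta> :: "'a \<Rightarrow> real"
  assumes \<Omega>: "\<Omega> \<in> lmeasurable" and p: "1 < p"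
    and f: "\<And>k. f k \<in> borel_measurable (lebesgue_on \<Omega>)" "\<And>k x. \<bar>f k x\<bar> \<le> 1"
    and \<theta>: "\<theta> \<in> borel_measurable (lebesgue_on \<Omega>)" "\<And>x. \<bar>\<theta> x\<bar> \<le> 1"
    and weak: "\<And>h. integrable (lebesgue_on \<Omega>) h \<Longrightarrow>
      (\<lambda>k. \<integral>x. f k x * h x \<partial>lebesgue_on \<Omega>) \<longlonglongrightarrow> (\<integral>x. \<theta> x * h x \<partial>lebesgue_on \<Omega>)"
  shows "Lp_weak_conv p \<Omega> (\<lambda>k x. (f k x, 0::'b::euclidean_space)) (\<lambda>x. (\<theta> x, 0))"
  unfolding Lp_weak_conv_def
proof (intro conjI allI ballI)
  show "(\<lambda>x. (f k x, 0::'b)) \<in> Lp p \<Omega>" for k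
    using \<Omega> f(1)[of k] f(2)[of k] p
    by (intro bounded_measurable_in_Lp[where B = 1]) (auto intro: measurable_Pair)
  show "(\<lambda>x. (\<theta> x, 0::'b)) \<in> Lp p \<Omega>"
    using \<Omega> \<theta> p by (intro bounded_measurable_in_Lp[where B = 1]) (auto intro: measurable_Pair)
  fix h :: "'a \<Rightarrow> real \<times> 'b"
  assume "h \<in> Lp (p / (p - 1)) \<Omega>"
  moreover have "1 \<le> p / (p - 1)"
    using p by (simp add: field_simps)
  ultimately have "integrable (lebesgue_on \<Omega>) (\<lambda>x. fst (h x))"
    using \<Omega> by (intro integrable_fst Lp_imp_integrable)
  moreover have "(a, 0::'b) \<bullet> y = a * fst y" for a and y :: "real \<times> 'b"
    by (cases y) (simp add: inner_Pair)
  ultimately show "(\<lambda>k. \<integral>x. (f k x, 0) \<bullet> h x \<partial>lebesgue_on \<Omega>) \<longlonglongrightarrow> (\<integral>x. (\<theta> x, 0) \<bullet> h x \<partial>lebesgue_on \<Omega>)"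
    using weak by simp
qed

lemma Mosco_conv_weak_limit:
  assumes "Mosco_conv p \<Omega> A B" and "strict_mono r" and "\<And>k. x k \<in> A (r k)" and "Lp_weak_conv p \<Omega> x F"
  shows "F \<in> B"
  using assms unfolding Mosco_conv_def by blast

lemma Mosco_conv_recovery_sequence:
  assumes "Mosco_conv p \<Omega> A B" and "F \<in> B"
  obtains x where "\<And>n. x n \<in> A n" and "Lp_strong_conv p \<Omega> x F"
  using assms unfolding Mosco_conv_def by blast

lemma Mosco_recovery_measure_diff_tendsto_0:
  fixes \<Omega> D :: "'a::euclidean_space set" and Dn :: "nat \<Rightarrow> 'a set"
  assumes \<Omega>: "\<Omega> \<in> lmeasurable" and D: "open D" "D \<subseteq> \<Omega>" and Dn: "\<And>n. Dn n \<in> sets lebesgue"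
    and p: "0 < p" and Mosco: "Mosco_conv p \<Omega> (\<lambda>n. W1p_emb p \<Omega> (Dn n)) (W1p_emb p \<Omega> D)"
  shows "(\<lambda>n. measure lebesgue (D - Dn n)) \<longlonglongrightarrow> 0"
proof -
  let ?F = "\<lambda>x. (indicator D x :: real, 0::'a)"
  obtain u where u: "\<And>n. u n \<in> W1p_emb p \<Omega> (Dn n)" and strong: "Lp_strong_conv p \<Omega> u ?F"
    using Mosco_conv_recovery_sequence[OF Mosco indicator_in_W1p_emb[OF D \<Omega>]] p by auto
  have bound: "measure lebesgue (D - Dn n) \<le> (\<integral>x. norm (u n x - ?F x) powr p \<partial>lebesgue_on \<Omega>)" for n
  proof -
    have DDn: "D - Dn n \<in> sets lebesgue" "D - Dn n \<subseteq> \<Omega>"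
      using D Dn by auto
    have "measure lebesgue (D - Dn n) = (\<integral>x. indicator (D - Dn n) x \<partial>lebesgue_on \<Omega>)"
      using integral_indicator_lebesgue_on(2)[OF \<Omega> DDn] by simp
    also have "\<dots> \<le> (\<integral>x. norm (u n x - ?F x) powr p \<partial>lebesgue_on \<Omega>)"
    proof (rule integral_mono_AE)
      show "integrable (lebesgue_on \<Omega>) (indicator (D - Dn n) :: 'a \<Rightarrow> real)"
        using integral_indicator_lebesgue_on(1)[OF \<Omega> DDn] .
      show "integrable (lebesgue_on \<Omega>) (\<lambda>x. norm (u n x - ?F x) powr p)"
        using strong p unfolding Lp_strong_conv_def by (intro Lp_diff_integrable) auto
      show "AE x in lebesgue_on \<Omega>. indicator (D - Dn n) x \<le> norm (u n x - ?F x) powr p"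
        using W1p_emb_vanishes_outside[OF u] by eventually_elim (auto split: split_indicator)
    qed
    finally show ?thesis .
  qed
  have "(\<lambda>n. \<integral>x. norm (u n x - ?F x) powr p \<partial>lebesgue_on \<Omega>) \<longlonglongrightarrow> 0"
    using strong unfolding Lp_strong_conv_def by blast
  then show ?thesis
  proof (rule real_tendsto_sandwich[OF _ _ tendsto_const, rotated 2])
    show "\<forall>\<^sub>F n in sequentially. 0 \<le> measure lebesgue (D - Dn n)"
      by simp
    show "\<forall>\<^sub>F n in sequentially. measure lebesgue (D - Dn n) \<le> (\<integral>x. norm (u n x - ?F x) powr p \<partial>lebesgue_on \<Omega>)"
      using bound by simp
  qed
qed

lemma Mosco_subseq_measure_diff_tendsto_0:
  fixes \<Omega> D :: "'a::euclidean_space set" and Dn :: "nat \<Rightarrow> 'a set" and r :: "nat \<Rightarrow> nat"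
  assumes \<Omega>: "\<Omega> \<in> lmeasurable" and D: "D \<in> sets lebesgue"
    and Dn: "\<And>n. open (Dn n)" "\<And>n. Dn n \<subseteq> \<Omega>" and p: "1 < p"
    and Mosco: "Mosco_conv p \<Omega> (\<lambda>n. W1p_emb p \<Omega> (Dn n)) (W1p_emb p \<Omega> D)"
    and r: "strict_mono r"
  obtains s where "strict_mono s" and "(\<lambda>k. measure lebesgue (Dn (r (s k)) - D)) \<longlonglongrightarrow> 0"
proof -
  let ?M = "lebesgue_on \<Omega>"
  have \<Omega>_sets: "\<Omega> \<in> sets lebesgue"
    using \<Omega> by auto
  have Dn_sets: "Dn n \<in> sets lebesgue" for n
    using Dn(1) by simp
  obtain s :: "nat \<Rightarrow> nat" and \<theta> :: "'a \<Rightarrow> real"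
    where s: "strict_mono s" and \<theta>: "\<theta> \<in> borel_measurable ?M" "\<And>x. 0 \<le> \<theta> x" "\<And>x. \<theta> x \<le> 1"
    and weak: "\<And>h. integrable ?M h \<Longrightarrow>
      (\<lambda>k. \<integral>x. indicator (Dn (r (s k))) x * h x \<partial>?M) \<longlonglongrightarrow> (\<integral>x. \<theta> x * h x \<partial>?M)"
    using indicators_weakly_convergent_subseq[OF \<Omega>, where E = "\<lambda>k. Dn (r k)"] Dn_sets by blast
  have "(\<lambda>x. (\<theta> x, 0::'a)) \<in> W1p_emb p \<Omega> D"
  proof (rule Mosco_conv_weak_limit[OF Mosco strict_mono_o[OF r s]])
    show "(\<lambda>x. (indicator (Dn ((r \<circ> s) k)) x, 0::'a)) \<in> W1p_emb p \<Omega> (Dn ((r \<circ> s) k))" for k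
      using Dn \<Omega> p by (intro indicator_in_W1p_emb) auto
    show "Lp_weak_conv p \<Omega> (\<lambda>k x. (indicator (Dn ((r \<circ> s) k)) x, 0::'a)) (\<lambda>x. (\<theta> x, 0))"
      using \<Omega> p Dn_sets \<theta> weak
      by (intro Lp_weak_conv_first_component) (auto intro: measurable_restrict_space1 split: split_indicator)
  qed
  then have "AE x in ?M. \<theta> x * indicator (\<Omega> - D) x = 0"
    by (rule W1p_emb_vanishes_outside[THEN AE_mp]) (auto simp: zero_prod_def split: split_indicator)
  then have "(\<integral>x. \<theta> x * indicator (\<Omega> - D) x \<partial>?M) = 0"
    by (rule integral_eq_zero_AE)
  moreover have "(\<integral>x. indicator (Dn (r (s k))) x * indicator (\<Omega> - D) x \<partial>?M) = measure lebesgue (Dn (r (s k)) - D)"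
    for k
  proof -
    have "(\<lambda>x. indicator (Dn (r (s k))) x * indicator (\<Omega> - D) x) = (indicator (Dn (r (s k)) - D) :: 'a \<Rightarrow> real)"
      using Dn(2)[of "r (s k)"] by (auto simp: fun_eq_iff split: split_indicator)
    then show ?thesis
      using integral_indicator_lebesgue_on(2)[OF \<Omega>, of "Dn (r (s k)) - D"] Dn_sets Dn(2) D by auto
  qed
  ultimately have "(\<lambda>k. measure lebesgue (Dn (r (s k)) - D)) \<longlonglongrightarrow> 0"
    using weak[OF integral_indicator_lebesgue_on(1)[OF \<Omega>, of "\<Omega> - D"]] \<Omega>_sets D by auto
  with s show ?thesis
    by (rule that)
qed

lemma Mosco_weak_limit_measure_diff_tendsto_0:
  fixes \<Omega> D :: "'a::euclidean_space set" and Dn :: "nat \<Rightarrow> 'a set"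
  assumes \<Omega>: "\<Omega> \<in> lmeasurable" and D: "D \<in> sets lebesgue"
    and Dn: "\<And>n. open (Dn n)" "\<And>n. Dn n \<subseteq> \<Omega>" and p: "1 < p"
    and Mosco: "Mosco_conv p \<Omega> (\<lambda>n. W1p_emb p \<Omega> (Dn n)) (W1p_emb p \<Omega> D)"
  shows "(\<lambda>n. measure lebesgue (Dn n - D)) \<longlonglongrightarrow> 0"
proof (rule order_tendstoI)
  show "\<forall>\<^sub>F n in sequentially. a < measure lebesgue (Dn n - D)" if "a < 0" for a :: real
  proof -
    have "a < measure lebesgue (Dn n - D)" for n
      using that measure_nonneg[of lebesgue "Dn n - D"] by linarith
    then show ?thesis
      by simp
  qed
  show "\<forall>\<^sub>F n in sequentially. measure lebesgue (Dn n - D) < \<epsilon>" if "0 < \<epsilon>" for \<epsilon> :: real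
  proof (rule ccontr)
    assume "\<not> ?thesis"
    from not_eventually_sequentiallyD[OF this]
    obtain r :: "nat \<Rightarrow> nat" where r: "strict_mono r" "\<And>k. \<not> measure lebesgue (Dn (r k) - D) < \<epsilon>"
      by blast
    then obtain s where "(\<lambda>k. measure lebesgue (Dn (r (s k)) - D)) \<longlonglongrightarrow> 0"
      using Mosco_subseq_measure_diff_tendsto_0[OF assms] by blast
    then have "\<epsilon> \<le> 0"
      using r(2) by (intro LIMSEQ_le_const) (auto simp: not_less)
    with \<open>0 < \<epsilon>\<close> show False
      by simp
  qed
qed

lemma measure_symmetric_difference_tendsto_0:
  assumes "\<And>n. A n \<in> fmeasurable M" and "B \<in> fmeasurable M"
    and "(\<lambda>n. measure M (A n - B)) \<longlonglongrightarrow> 0" and "(\<lambda>n. measure M (B - A n)) \<longlonglongrightarrow> 0"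
  shows "(\<lambda>n. measure M ((A n - B) \<union> (B - A n))) \<longlonglongrightarrow> 0"
    and "(\<lambda>n. measure M (A n)) \<longlonglongrightarrow> measure M B"
proof -
  have sum: "(\<lambda>n. measure M (A n - B) + measure M (B - A n)) \<longlonglongrightarrow> 0"
    using tendsto_add[OF assms(3,4)] by simp
  have "measure M ((A n - B) \<union> (B - A n)) \<le> measure M (A n - B) + measure M (B - A n)" for n
    using assms(1,2) by (intro measure_Un_le) auto
  then show "(\<lambda>n. measure M ((A n - B) \<union> (B - A n))) \<longlonglongrightarrow> 0"
    by (intro real_tendsto_sandwich[OF _ _ tendsto_const sum] always_eventually) auto
  have "\<bar>measure M (A n) - measure M B\<bar> \<le> measure M (A n - B) + measure M (B - A n)" for n
    using measure_diff_le_measure_setdiff[OF assms(1) assms(2), of n]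
      measure_diff_le_measure_setdiff[OF assms(2) assms(1), of n]
      measure_nonneg[of M "A n - B"] measure_nonneg[of M "B - A n"]
    by linarith
  then have "(\<lambda>n. measure M (A n) - measure M B) \<longlonglongrightarrow> 0"
    by (intro Lim_null_comparison[OF _ sum]) auto
  then show "(\<lambda>n. measure M (A n)) \<longlonglongrightarrow> measure M B"
    by (rule LIM_zero_cancel)
qed

theorem corollary2p14:
  fixes \<Omega> D :: "'a::euclidean_space set" and Dn :: "nat \<Rightarrow> 'a set" and p :: real
  assumes "bounded \<Omega>" and "open \<Omega>"
    and "\<And>n. open (Dn n)" and "\<And>n. Dn n \<subseteq> \<Omega>"
    and "open D" and "D \<subseteq> \<Omega>"
    and "1 < p"
    and "Mosco_conv p \<Omega> (\<lambda>n. W1p_emb p \<Omega> (Dn n)) (W1p_emb p \<Omega> D)"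
  shows "(\<lambda>n. measure lebesgue ((Dn n - D) \<union> (D - Dn n))) \<longlonglongrightarrow> 0 \<and>
         (\<lambda>n. measure lebesgue (Dn n)) \<longlonglongrightarrow> measure lebesgue D"
proof -
  have \<Omega>: "\<Omega> \<in> lmeasurable"
    using assms(1,2) by (intro bounded_set_imp_lmeasurable) simp_all
  have Dn: "Dn n \<in> lmeasurable" for n
    using fmeasurableI2[OF \<Omega> assms(4)] assms(3) by simp
  have D: "D \<in> lmeasurable"
    using fmeasurableI2[OF \<Omega> assms(6)] assms(5) by simp
  have "(\<lambda>n. measure lebesgue (Dn n - D)) \<longlonglongrightarrow> 0"
    using \<Omega> assms(3,4,7,8) D by (intro Mosco_weak_limit_measure_diff_tendsto_0) auto
  moreover have "(\<lambda>n. measure lebesgue (D - Dn n)) \<longlonglongrightarrow> 0"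
    using \<Omega> assms(5,6,7,8) Dn by (intro Mosco_recovery_measure_diff_tendsto_0) auto
  ultimately show ?thesis
    using measure_symmetric_difference_tendsto_0[where A = Dn, OF Dn D] by blast
qed

end
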